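(* A family of structures $\mathfrak{K}$ is $\mathbf{nUs}$-learnable if and only if it is $\mathbf{Dec}$-learnable.
   Context: All structures are countable, have domain $\mathbb{N}$, are in a finite relational signature, and are identified with their atomic diagrams. A family of structures $\mathfrak{K}$ is a countable set of pairwise nonisomorphic such structures. $\mathcal{S}\restriction_s$ is the finite substructure of $\mathcal{S}$ on $\{0,\dots,s\}$. $\mathrm{LD}(\mathfrak{K})$ is the set of structures with domain $\mathbb{N}$ isomorphic to a member of $\mathfrak{K}$. The hypothesis space is $\{\ulcorner\mathcal{A}\urcorner:\mathcal{A}\in\mathfrak{K}\}\cup\{?\}$ (distinct formal symbols); a learner is an arbitrary function $\mathbf{M}$ from $\{\mathcal{S}\restriction_s:\mathcal{S}\in\mathrm{LD}(\mathfrak{K}),s\in\mathbb{N}\}$ to the hypothesis space. $\mathbf{M}$ $\mathbf{Ex}$-learns $\mathfrak{K}$ if for every $\mathcal{S}\in\mathrm{LD}(\mathfrak{K})$, $\mathbf{M}(\mathcal{S}\restriction_n)$ is eventually constantly $\ulcorner\mathcal{A}\urcorner$ where $\mathcal{A}\in\mathfrak{K}$, $\mathcal{A}\cong\mathcal{S}$. $\mathbf{M}$ $\mathbf{nUs}$-learns $\mathfrak{K}$ if it $\mathbf{Ex}$-learns $\mathfrak{K}$ and for every $\mathcal{S}\in\mathrm{LD}(\mathfrak{K})$ with $\mathcal{S}\cong\mathcal{A}\in\mathfrak{K}$, if $n_0$ is least with $\mathbf{M}(\mathcal{S}\restriction_{n_0})=\ulcorner\mathcal{A}\urcorner$ then $\mathbf{M}(\mathcal{S}\restriction_m)=\ulcorner\mathcal{A}\urcorner$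 for all $m>n_0$. $\mathbf{M}$ $\mathbf{Dec}$-learns $\mathfrak{K}$ if it $\mathbf{Ex}$-learns $\mathfrak{K}$ and for every $\mathcal{S}\in\mathrm{LD}(\mathfrak{K})$, every $\mathcal{A}\in\mathfrak{K}$ and every $n$: if $\mathbf{M}(\mathcal{S}\restriction_n)=\ulcorner\mathcal{A}\urcorner\neq\mathbf{M}(\mathcal{S}\restriction_{n+1})$ then $\mathbf{M}(\mathcal{S}\restriction_m)\neq\ulcorner\mathcal{A}\urcorner$ for all $m>n$. A family is $\mathbf{nUs}$-/$\mathbf{Dec}$-learnable if some learner $\mathbf{nUs}$-/$\mathbf{Dec}$-learns it. *)

theory Defs
  imports Main "HOL-Library.Countable_Set"
begin

text \<open>A finite relational signature is a list of arities: relation symbol i (for i < length sig)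
has arity sig ! i. A structure with domain nat is identified with its atomic diagram, i.e. for
each relation symbol the set of tuples (lists of the right length) on which it holds.\<close>

type_synonym sig = "nat list"
type_synonym struc = "nat \<Rightarrow> nat list \<Rightarrow> bool"

definition wf_struc :: "sig \<Rightarrow> struc \<Rightarrow> bool" where
  "wf_struc \<sigma> S \<longleftrightarrow> (\<forall>i xs. S i xs \<longrightarrow> i < length \<sigma> \<and> length xs = \<sigma> ! i)"

definition iso :: "sig \<Rightarrow> struc \<Rightarrow> struc \<Rightarrow> bool" where
  "iso \<sigma> S T \<longleftrightarrow> (\<exists>f. bij (f :: nat \<Rightarrow> nat) \<and>
      (\<forall>i < length \<sigma>. \<forall>xs. length xs = \<sigma> ! i \<longrightarrow> (S i xs \<longleftrightarrow> T i (map f xs))))"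

definition family :: "sig \<Rightarrow> struc set \<Rightarrow> bool" where
  "family \<sigma> K \<longleftrightarrow> countable K \<and> (\<forall>A\<in>K. wf_struc \<sigma> A) \<and>
     (\<forall>A\<in>K. \<forall>B\<in>K. iso \<sigma> A B \<longrightarrow> A = B)"

definition LD :: "sig \<Rightarrow> struc set \<Rightarrow> struc set" where
  "LD \<sigma> K = {S. wf_struc \<sigma> S \<and> (\<exists>A\<in>K. iso \<sigma> S A)}"

definition restr :: "struc \<Rightarrow> nat \<Rightarrow> nat \<times> struc" where
  "restr S s = (s, (\<lambda>i xs. S i xs \<and> set xs \<subseteq> {0..s}))"

text \<open>Hypotheses: Some A stands for the code of A (A in K), None for '?'.
A learner maps finite restrictions to hypotheses.\<close>
type_synonym learner = "nat \<times> struc \<Rightarrow> struc option"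

definition is_learner :: "sig \<Rightarrow> struc set \<Rightarrow> learner \<Rightarrow> bool" where
  "is_learner \<sigma> K M \<longleftrightarrow>
     (\<forall>S\<in>LD \<sigma> K. \<forall>s. M (restr S s) = None \<or> (\<exists>A\<in>K. M (restr S s) = Some A))"

definition Ex_learns :: "sig \<Rightarrow> struc set \<Rightarrow> learner \<Rightarrow> bool" where
  "Ex_learns \<sigma> K M \<longleftrightarrow> (\<forall>S\<in>LD \<sigma> K. \<exists>A\<in>K. iso \<sigma> A S \<and>
       (\<exists>n0. \<forall>n\<ge>n0. M (restr S n) = Some A))"

definition nUs_learns :: "sig \<Rightarrow> struc set \<Rightarrow> learner \<Rightarrow> bool" where
  "nUs_learns \<sigma> K M \<longleftrightarrow> Ex_learns \<sigma> K M \<and>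
     (\<forall>S\<in>LD \<sigma> K. \<forall>A\<in>K. iso \<sigma> S A \<longrightarrow>
        (\<forall>n0. M (restr S n0) = Some A \<and> (\<forall>n<n0. M (restr S n) \<noteq> Some A) \<longrightarrow>
           (\<forall>m>n0. M (restr S m) = Some A)))"

definition Dec_learns :: "sig \<Rightarrow> struc set \<Rightarrow> learner \<Rightarrow> bool" where
  "Dec_learns \<sigma> K M \<longleftrightarrow> Ex_learns \<sigma> K M \<and>
     (\<forall>S\<in>LD \<sigma> K. \<forall>A\<in>K. \<forall>n. M (restr S n) = Some A \<and> M (restr S (Suc n)) \<noteq> Some A \<longrightarrow>
        (\<forall>m>n. M (restr S m) \<noteq> Some A))"

definition nUs_learnable :: "sig \<Rightarrow> struc set \<Rightarrow> bool" where
  "nUs_learnable \<sigma> K \<longleftrightarrow> (\<exists>M. is_learner \<sigma> K M \<and> nUs_learns \<sigma> K M)"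

definition Dec_learnable :: "sig \<Rightarrow> struc set \<Rightarrow> bool" where
  "Dec_learnable \<sigma> K \<longleftrightarrow> (\<exists>M. is_learner \<sigma> K M \<and> Dec_learns \<sigma> K M)"

end

theory Submission
  imports Defs
begin

text \<open>A Dec-learner never returns to a hypothesis it has abandoned. As the members of the
family are pairwise nonisomorphic, the correct hypothesis is the one output in the limit, so
once a Dec-learner reaches it, it can never leave it again: it is already an nUs-learner.
Conversely, an nUs-learner becomes a Dec-learner when every output that returns to an earlier,
abandoned guess is replaced by \<open>?\<close>. This never touches the correct hypothesis, whose
outputs form one unbroken block from its first appearance on.\<close>

lemma iso_sym:
  assumes "iso \<sigma> A B" shows "iso \<sigma> B A"
proof -
  obtain f where f: "bij f" "\<forall>i < length \<sigma>. \<forall>xs. length xs = \<sigma> ! i \<longrightarrow> (A i xs \<longleftrightarrow> B i (map f xs))"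
    using assms unfolding iso_def by blast
  have "\<forall>i < length \<sigma>. \<forall>xs. length xs = \<sigma> ! i \<longrightarrow> (B i xs \<longleftrightarrow> A i (map (inv f) xs))"
  proof (intro allI impI)
    fix i and xs :: "nat list" assume "i < length \<sigma>" "length xs = \<sigma> ! i"
    with f(2) have "A i (map (inv f) xs) \<longleftrightarrow> B i (map f (map (inv f) xs))" by simp
    moreover have "map f (map (inv f) xs) = xs"
      using f(1) by (simp add: bij_is_surj surj_f_inv_f map_idI)
    ultimately show "B i xs \<longleftrightarrow> A i (map (inv f) xs)" by simp
  qed
  with bij_imp_bij_inv[OF f(1)] show ?thesis unfolding iso_def by blast
qed

lemma iso_trans:
  assumes "iso \<sigma> A B" "iso \<sigma> B C" shows "iso \<sigma> A C"
proof -
  obtain f where f: "bij f" "\<forall>i < length \<sigma>. \<forall>xs. length xs = \<sigma> ! i \<longrightarrow> (A i xs \<longleftrightarrow> B i (map f xs))"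
    using assms(1) unfolding iso_def by blast
  obtain g where g: "bij g" "\<forall>i < length \<sigma>. \<forall>xs. length xs = \<sigma> ! i \<longrightarrow> (B i xs \<longleftrightarrow> C i (map g xs))"
    using assms(2) unfolding iso_def by blast
  have "\<forall>i < length \<sigma>. \<forall>xs. length xs = \<sigma> ! i \<longrightarrow> (A i xs \<longleftrightarrow> C i (map (g \<circ> f) xs))"
    using f(2) g(2) by simp
  with bij_comp[OF f(1) g(1)] show ?thesis unfolding iso_def by blast
qed

lemma family_iso_eq:
  assumes "family \<sigma> K" "A \<in> K" "B \<in> K" "iso \<sigma> A S" "iso \<sigma> S B"
  shows "A = B"
  using assms iso_trans unfolding family_def by blast

lemma restr_restr: "n \<le> s \<Longrightarrow> restr (snd (restr S s)) n = restr S n"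
  unfolding restr_def by (auto intro!: ext)

definition no_return :: "(nat \<Rightarrow> 'a) \<Rightarrow> 'a \<Rightarrow> bool" where
  "no_return f a \<longleftrightarrow> (\<forall>n. f n = a \<and> f (Suc n) \<noteq> a \<longrightarrow> (\<forall>m>n. f m \<noteq> a))"

definition stays_once_reached :: "(nat \<Rightarrow> 'a) \<Rightarrow> 'a \<Rightarrow> bool" where
  "stays_once_reached f a \<longleftrightarrow> (\<forall>n0. f n0 = a \<and> (\<forall>n<n0. f n \<noteq> a) \<longrightarrow> (\<forall>m>n0. f m = a))"

lemma leaves_at_some_step:
  assumes "f n = a" "f m \<noteq> a" "n < m"
  shows "\<exists>k. n \<le> k \<and> k < m \<and> f k = a \<and> f (Suc k) \<noteq> a"
  using assms
proof (induction m)
  case 0 then show ?case by simp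
next
  case (Suc m)
  show ?case
  proof (cases "f m = a")
    case True then show ?thesis using Suc.prems by (intro exI[of _ m]) auto
  next
    case False
    with Suc.prems have "n < m" by (cases "n = m") auto
    then show ?thesis using Suc.IH[OF Suc.prems(1) False] by auto
  qed
qed

lemma no_return_stays:
  assumes nr: "no_return f a" and lim: "\<forall>m\<ge>n1. f m = a" and "f n = a" "n \<le> m"
  shows "f m = a"
proof (rule ccontr)
  assume "f m \<noteq> a"
  with assms(3,4) obtain k where k: "f k = a" "f (Suc k) \<noteq> a"
    using leaves_at_some_step[of f n a m] by fastforce
  with nr have "\<forall>m>k. f m \<noteq> a" unfolding no_return_def by blast
  then have "f (max n1 (Suc k)) \<noteq> a" by simp
  then show False using lim by simp
qed

lemma no_return_imp_stays_once_reached: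
  assumes "no_return f a" "\<forall>m\<ge>n1. f m = a"
  shows "stays_once_reached f a"
  unfolding stays_once_reached_def using no_return_stays[OF assms] by (blast intro: less_imp_le)

definition suppress_returns :: "(nat \<Rightarrow> 'a option) \<Rightarrow> nat \<Rightarrow> 'a option" where
  "suppress_returns f s =
     (if \<forall>n\<le>s. f n = f s \<longrightarrow> (\<forall>m\<in>{n..s}. f m = f s) then f s else None)"

lemma suppress_returns_cases: "suppress_returns f s = f s \<or> suppress_returns f s = None"
  unfolding suppress_returns_def by simp

lemma suppress_returns_Some:
  "suppress_returns f s = Some a \<longleftrightarrow>
     f s = Some a \<and> (\<forall>n\<le>s. f n = Some a \<longrightarrow> (\<forall>m\<in>{n..s}. f m = Some a))"
  unfolding suppress_returns_def by (cases "f s = Some a") simp_all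

lemma suppress_returns_cong:
  assumes eq: "\<And>n. n \<le> s \<Longrightarrow> f n = g n"
  shows "suppress_returns f s = suppress_returns g s"
proof -
  have "(\<forall>n\<le>s. f n = f s \<longrightarrow> (\<forall>m\<in>{n..s}. f m = f s)) \<longleftrightarrow>
        (\<forall>n\<le>s. g n = g s \<longrightarrow> (\<forall>m\<in>{n..s}. g m = g s))"
    using eq by auto
  moreover have "f s = g s" using eq by simp
  ultimately show ?thesis unfolding suppress_returns_def by argo
qed

lemma no_return_suppress_returns: "no_return (suppress_returns f) (Some a)"
  unfolding no_return_def
proof (intro allI impI)
  fix n m
  assume left: "suppress_returns f n = Some a \<and> suppress_returns f (Suc n) \<noteq> Some a"
    and "n < m"
  then have "f n = Some a" and block: "\<forall>k\<le>n. f k = Some a \<longrightarrow> (\<forall>j\<in>{k..n}. f j = Some a)"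
    unfolding suppress_returns_Some by blast+
  have "f (Suc n) \<noteq> Some a"
  proof
    assume "f (Suc n) = Some a"
    have "\<forall>k\<le>Suc n. f k = Some a \<longrightarrow> (\<forall>j\<in>{k..Suc n}. f j = Some a)"
    proof (intro allI impI ballI)
      fix k j assume "f k = Some a" "j \<in> {k..Suc n}"
      show "f j = Some a"
      proof (cases "j = Suc n")
        case False
        with \<open>j \<in> {k..Suc n}\<close> have "k \<le> n" "j \<in> {k..n}" by auto
        with block \<open>f k = Some a\<close> show ?thesis by blast
      qed (simp add: \<open>f (Suc n) = Some a\<close>)
    qed
    with \<open>f (Suc n) = Some a\<close> left show False
      unfolding suppress_returns_Some by blast
  qed
  moreover have "n \<le> m" "Suc n \<in> {n..m}" using \<open>n < m\<close> by auto
  ultimately show "suppress_returns f m \<noteq> Some a"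
    using \<open>f n = Some a\<close> unfolding suppress_returns_Some by blast
qed

lemma suppress_returns_eventually:
  assumes stays: "stays_once_reached f (Some a)" and lim: "\<forall>m\<ge>n1. f m = Some a"
  shows "\<exists>n0. \<forall>m\<ge>n0. suppress_returns f m = Some a"
proof -
  define n0 where "n0 = (LEAST n. f n = Some a)"
  have "f n0 = Some a" unfolding n0_def by (rule LeastI[of _ n1]) (simp add: lim)
  have first: "n0 \<le> n" if "f n = Some a" for n unfolding n0_def using that by (rule Least_le)
  then have "\<forall>n<n0. f n \<noteq> Some a" by (meson not_le)
  with stays \<open>f n0 = Some a\<close> have "\<forall>m>n0. f m = Some a"
    unfolding stays_once_reached_def by blast
  with \<open>f n0 = Some a\<close> have after: "f m = Some a" if "n0 \<le> m" for m
    using that by (cases "m = n0") auto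
  have "suppress_returns f m = Some a" if "n0 \<le> m" for m
    unfolding suppress_returns_Some using after first that by (meson atLeastAtMost_iff order_trans)
  then show ?thesis by blast
qed

lemma Dec_learns_iff:
  "Dec_learns \<sigma> K M \<longleftrightarrow>
     Ex_learns \<sigma> K M \<and> (\<forall>S\<in>LD \<sigma> K. \<forall>A\<in>K. no_return (\<lambda>n. M (restr S n)) (Some A))"
  unfolding Dec_learns_def no_return_def by blast

lemma nUs_learns_iff:
  "nUs_learns \<sigma> K M \<longleftrightarrow> Ex_learns \<sigma> K M \<and>
     (\<forall>S\<in>LD \<sigma> K. \<forall>A\<in>K. iso \<sigma> S A \<longrightarrow> stays_once_reached (\<lambda>n. M (restr S n)) (Some A))"
  unfolding nUs_learns_def stays_once_reached_def by blast

lemma Dec_learns_imp_nUs_learns: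
  assumes fam: "family \<sigma> K" and dec: "Dec_learns \<sigma> K M"
  shows "nUs_learns \<sigma> K M"
  unfolding nUs_learns_iff
proof (intro conjI ballI impI)
  show ex: "Ex_learns \<sigma> K M" using dec unfolding Dec_learns_iff by blast
  fix S A assume S: "S \<in> LD \<sigma> K" and A: "A \<in> K" and "iso \<sigma> S A"
  from ex S obtain B n1 where B: "B \<in> K" "iso \<sigma> B S" "\<forall>n\<ge>n1. M (restr S n) = Some B"
    unfolding Ex_learns_def by blast
  with family_iso_eq[OF fam _ A] \<open>iso \<sigma> S A\<close> have "B = A" by blast
  with dec S A B(3) show "stays_once_reached (\<lambda>n. M (restr S n)) (Some A)"
    unfolding Dec_learns_iff by (blast intro: no_return_imp_stays_once_reached)
qed

definition suppress_returns_learner :: "learner \<Rightarrow> learner" where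
  "suppress_returns_learner M = (\<lambda>(s, T). suppress_returns (\<lambda>n. M (restr T n)) s)"

lemma suppress_returns_learner_restr:
  "suppress_returns_learner M (restr S s) = suppress_returns (\<lambda>n. M (restr S n)) s"
proof -
  have "fst (restr S s) = s" unfolding restr_def by simp
  then have "suppress_returns_learner M (restr S s)
      = suppress_returns (\<lambda>n. M (restr (snd (restr S s)) n)) s"
    unfolding suppress_returns_learner_def by (simp add: split_beta)
  also have "\<dots> = suppress_returns (\<lambda>n. M (restr S n)) s"
    by (rule suppress_returns_cong) (simp add: restr_restr)
  finally show ?thesis .
qed

lemma nUs_learns_imp_Dec_learns:
  assumes learner: "is_learner \<sigma> K M" and nus: "nUs_learns \<sigma> K M"
  shows "is_learner \<sigma> K (suppress_returns_learner M)"
    and "Dec_learns \<sigma> K (suppress_returns_learner M)"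
proof -
  show "is_learner \<sigma> K (suppress_returns_learner M)"
    unfolding is_learner_def suppress_returns_learner_restr
  proof (intro ballI allI)
    fix S s assume "S \<in> LD \<sigma> K"
    with learner have "M (restr S s) = None \<or> (\<exists>A\<in>K. M (restr S s) = Some A)"
      unfolding is_learner_def by blast
    with suppress_returns_cases[of "\<lambda>n. M (restr S n)" s]
    show "suppress_returns (\<lambda>n. M (restr S n)) s = None \<or>
        (\<exists>A\<in>K. suppress_returns (\<lambda>n. M (restr S n)) s = Some A)"
      by auto
  qed
  from nus have ex: "Ex_learns \<sigma> K M"
    and stays: "\<forall>S\<in>LD \<sigma> K. \<forall>A\<in>K. iso \<sigma> S A \<longrightarrow> stays_once_reached (\<lambda>n. M (restr S n)) (Some A)"
    unfolding nUs_learns_iff by blast+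
  have "Ex_learns \<sigma> K (suppress_returns_learner M)"
    unfolding Ex_learns_def suppress_returns_learner_restr
  proof
    fix S assume S: "S \<in> LD \<sigma> K"
    with ex obtain A n1 where A: "A \<in> K" "iso \<sigma> A S" "\<forall>n\<ge>n1. M (restr S n) = Some A"
      unfolding Ex_learns_def by blast
    from A(2) have "iso \<sigma> S A" by (rule iso_sym)
    with stays S A(1) have "stays_once_reached (\<lambda>n. M (restr S n)) (Some A)" by blast
    then have "\<exists>n0. \<forall>n\<ge>n0. suppress_returns (\<lambda>n. M (restr S n)) n = Some A"
      using A(3) by (rule suppress_returns_eventually)
    with A(1,2)
    show "\<exists>A\<in>K. iso \<sigma> A S \<and> (\<exists>n0. \<forall>n\<ge>n0. suppress_returns (\<lambda>n. M (restr S n)) n = Some A)"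
      by blast
  qed
  moreover have "\<forall>S\<in>LD \<sigma> K. \<forall>A\<in>K. no_return (\<lambda>n. suppress_returns_learner M (restr S n)) (Some A)"
    unfolding suppress_returns_learner_restr by (simp add: no_return_suppress_returns)
  ultimately show "Dec_learns \<sigma> K (suppress_returns_learner M)"
    unfolding Dec_learns_iff by blast
qed

theorem mainTheorem10:
  fixes \<sigma> :: sig and K :: "struc set"
  assumes "family \<sigma> K"
  shows "nUs_learnable \<sigma> K \<longleftrightarrow> Dec_learnable \<sigma> K"
  using nUs_learns_imp_Dec_learns Dec_learns_imp_nUs_learns[OF assms]
  unfolding nUs_learnable_def Dec_learnable_def by blast

end
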